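(* For every density matrix $\rho_{AB}$ on a finite-dimensional space $\mathcal H_A\otimes\mathcal H_B$, $\mu_{\mathrm{ent}}(\rho_{AB})=0$ if and only if $\rho_{AB}$ is separable, i.e., $\rho_{AB}=\sum_i p_i\,\tau_A^{(i)}\otimes\tau_B^{(i)}$ for some probability weights $p_i$ and density matrices $\tau_A^{(i)},\tau_B^{(i)}$.
   Context: For a bipartite density matrix $\rho_{AB}$ with reduced states $\rho_A,\rho_B$, the maximal correlation is $\mu(\rho_{AB})=\max |\mathrm{tr}(\rho_{AB}\, X_A\otimes Y_B^\dagger)|$ over $X_A\in\mathbf L(\mathcal H_A)$, $Y_B\in\mathbf L(\mathcal H_B)$ with $\mathrm{tr}(\rho_A X_A)=\mathrm{tr}(\rho_B Y_B)=0$ and $\mathrm{tr}(\rho_A X_AX_A^\dagger)=\mathrm{tr}(\rho_B Y_BY_B^\dagger)=1$. The maximal entanglement is $\mu_{\mathrm{ent}}(\rho_{AB})=\inf \max_i \mu(\tau^{(i)}_{AB})$, the infimum over all decompositions $\rho_{AB}=\sum_i p_i\tau^{(i)}_{AB}$ with $p_i\ge0$ and $\tau^{(i)}_{AB}$ density matrices. *)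

theory Defs
  imports "HOL-Analysis.Analysis"
begin

text \<open>Operators on a finite-dimensional Hilbert space with orthonormal basis indexed by a
finite type are represented as complex square matrices of type complex^'n::finite^'n.
The bipartite space H_A tensor H_B has basis indexed by 'a \<times> 'b.\<close>

definition mtrace :: "complex^'n::finite^'n \<Rightarrow> complex" where
  "mtrace A = (\<Sum>i\<in>UNIV. A $ i $ i)"

definition madj :: "complex^'n::finite^'n \<Rightarrow> complex^'n::finite^'n" where
  "madj A = (\<chi> i j. cnj (A $ j $ i))"

definition psd :: "complex^'n::finite^'n \<Rightarrow> bool" where
  "psd A \<longleftrightarrow> (\<forall>v::complex^'n.
     (let q = (\<Sum>i\<in>UNIV. \<Sum>j\<in>UNIV. cnj (v $ i) * A $ i $ j * v $ j)
      in Im q = 0 \<and> Re q \<ge> 0))"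

definition density :: "complex^'n::finite^'n \<Rightarrow> bool" where
  "density A \<longleftrightarrow> psd A \<and> mtrace A = 1"

definition tensor :: "complex^'a^'a \<Rightarrow> complex^'b^'b \<Rightarrow> complex^('a::finite\<times>'b::finite)^('a\<times>'b)" where
  "tensor A B = (\<chi> r s. A $ fst r $ fst s * B $ snd r $ snd s)"

definition ptraceB :: "complex^('a::finite\<times>'b::finite)^('a\<times>'b) \<Rightarrow> complex^'a^'a" where
  "ptraceB R = (\<chi> i k. \<Sum>j\<in>UNIV. R $ (i,j) $ (k,j))"

definition ptraceA :: "complex^('a::finite\<times>'b::finite)^('a\<times>'b) \<Rightarrow> complex^'b^'b" where
  "ptraceA R = (\<chi> j l. \<Sum>i\<in>UNIV. R $ (i,j) $ (i,l))"

text \<open>The maximum is taken as a supremum; 0 is inserted so that the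
value is 0 (convention max of the empty set = 0) when no feasible X, Y exist (e.g. a
one-dimensional factor). All values in the set are nonnegative, so otherwise nothing changes.\<close>
definition maxcorr :: "complex^('a::finite\<times>'b::finite)^('a\<times>'b) \<Rightarrow> real" where
  "maxcorr R = Sup (insert 0 {cmod (mtrace (R ** tensor X (madj Y))) | X Y.
      mtrace (ptraceB R ** X) = 0 \<and> mtrace (ptraceA R ** Y) = 0 \<and>
      mtrace (ptraceB R ** (X ** madj X)) = 1 \<and> mtrace (ptraceA R ** (Y ** madj Y)) = 1})"

definition maxent :: "complex^('a::finite\<times>'b::finite)^('a\<times>'b) \<Rightarrow> real" where
  "maxent R = Inf {Max ((\<lambda>i. maxcorr (\<tau> i)) ` {..<n}) | (n::nat) p \<tau>.
      (\<forall>i<n. p i \<ge> (0::real) \<and> density (\<tau> i)) \<and>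
      R = (\<Sum>i<n. p i *\<^sub>R \<tau> i)}"

definition separable :: "complex^('a::finite\<times>'b::finite)^('a\<times>'b) \<Rightarrow> bool" where
  "separable R \<longleftrightarrow> (\<exists>(n::nat) (p::nat \<Rightarrow> real) (tA::nat \<Rightarrow> complex^'a^'a) (tB::nat \<Rightarrow> complex^'b^'b).
      (\<forall>i<n. p i \<ge> 0 \<and> density (tA i) \<and> density (tB i)) \<and> (\<Sum>i<n. p i) = 1 \<and>
      R = (\<Sum>i<n. p i *\<^sub>R tensor (tA i) (tB i)))"

end

theory Submission
  imports Defs
begin

text \<open>A product state \<open>\<tau>\<^sub>A \<otimes> \<tau>\<^sub>B\<close> has maximal correlation 0, since the constraint
\<open>tr(\<tau>\<^sub>A X) = 0\<close> already kills \<open>tr((\<tau>\<^sub>A \<otimes> \<tau>\<^sub>B)(X \<otimes> Y\<^sup>\<dagger>))\<close>; so separable states have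
maximal entanglement 0. Conversely, testing the definition of \<open>\<mu>\<close> with centred matrix units
\<open>X = |k\<rangle>\<langle>i| - \<langle>i|\<tau>\<^sub>A|k\<rangle>\<close>, \<open>Y = |j\<rangle>\<langle>l| - \<dots>\<close> shows that every entry of \<open>\<tau> - \<tau>\<^sub>A \<otimes> \<tau>\<^sub>B\<close>
is bounded by \<open>\<mu>(\<tau>)\<close>, the normalisation being handled by Cauchy-Schwarz for the positive
form \<open>(P, Q) \<mapsto> tr(\<tau> P Q\<^sup>\<dagger>)\<close>. Hence if \<open>\<rho> = \<Sum> p\<^sub>i \<tau>\<^sub>i\<close> with all \<open>\<mu>(\<tau>\<^sub>i) \<le> \<delta>\<close>, then
\<open>\<rho>\<close> lies within \<open>O(\<delta>)\<close> of the separable state \<open>\<Sum> p\<^sub>i \<tau>\<^sub>i\<^sub>A \<otimes> \<tau>\<^sub>i\<^sub>B\<close>. The separable states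
form the convex hull of the compact set of product states, which is closed, so
\<open>\<mu>\<^sub>e\<^sub>n\<^sub>t(\<rho>) = 0\<close> forces \<open>\<rho>\<close> to be separable. Positivity of \<open>\<tau>\<^sub>A \<otimes> \<tau>\<^sub>B\<close> is obtained from a
Gram decomposition of \<open>\<tau>\<^sub>B\<close>, constructed by successive rank-one subtraction.\<close>

section \<open>Matrix algebra\<close>

lemma sum_UNIV_prod:
  "(\<Sum>x\<in>(UNIV::('a::finite\<times>'b::finite) set). f x) = (\<Sum>i\<in>UNIV. \<Sum>j\<in>UNIV. f (i,j))"
  by (simp add: UNIV_Times_UNIV[symmetric] sum.cartesian_product del: UNIV_Times_UNIV)

lemma sum_if_const_cond: "(\<Sum>i\<in>A. if P then f i else 0) = (if P then (\<Sum>i\<in>A. f i) else 0)"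
  by simp

lemma if_conj_zero: "(if P \<and> Q then x else 0) = (if P then (if Q then x else 0) else 0)"
  by simp

lemma mult_if_zero [simp]:
  "x * (if P then 1 else 0) = (if P then x else (0::'c::semiring_1))"
  "(if P then 1 else 0) * x = (if P then x else (0::'c::semiring_1))"
  "x * (if P then y else 0) = (if P then x * y else (0::'c::semiring_1))"
  "(if P then y else 0) * x = (if P then y * x else (0::'c::semiring_1))"
  by auto

lemma scaleR_complex: "r *\<^sub>R (z::complex) = complex_of_real r * z"
  by (simp add: scaleR_conv_of_real)

definition matrix_unit :: "'n \<Rightarrow> 'n \<Rightarrow> complex^'n::finite^'n" where
  "matrix_unit p q = (\<chi> i j. if i = p \<and> j = q then 1 else 0)"

lemma mtrace_matrix_mult: "mtrace (A ** B) = (\<Sum>i\<in>UNIV. \<Sum>j\<in>UNIV. A$i$j * B$j$i)"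
  by (simp add: mtrace_def matrix_matrix_mult_def)

lemma mtrace_mult_diff: "mtrace (R ** (A - B)) = mtrace (R ** A) - mtrace (R ** B)"
  by (simp add: mtrace_matrix_mult right_diff_distrib sum_subtractf)

lemma mtrace_mult_scaleR: "mtrace (R ** (r *\<^sub>R A)) = of_real r * mtrace (R ** A)"
  by (simp add: mtrace_matrix_mult sum_distrib_left scaleR_complex mult_ac)

lemma mtrace_mult_matrix_unit: "mtrace (R ** matrix_unit p q) = R$q$p"
  by (simp add: mtrace_matrix_mult matrix_unit_def if_conj_zero sum_if_const_cond cong: if_cong)

lemma mtrace_mult_mat: "mtrace (R ** mat c) = c * mtrace R"
  unfolding mtrace_matrix_mult
  by (simp add: mtrace_def mat_def sum_distrib_left mult_ac sum_if_const_cond cong: if_cong)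

lemma mtrace_scaleR_sum:
  "mtrace (\<Sum>i\<in>I. p i *\<^sub>R M i) = (\<Sum>i\<in>I. complex_of_real (p i) * mtrace (M i))"
  unfolding mtrace_def by (simp add: sum_component scaleR_complex sum_distrib_left) (rule sum.swap)

lemma matrix_mult_scaleR_scaleR:
  "(r *\<^sub>R A) ** (s *\<^sub>R (B::complex^'n::finite^'m)) = (r * s) *\<^sub>R ((A::complex^'m^'k) ** B)"
  by (simp add: matrix_matrix_mult_def vec_eq_iff scaleR_complex sum_distrib_left mult_ac)

lemma madj_mat: "madj (mat c) = mat (cnj c)"
  by (simp add: madj_def mat_def vec_eq_iff)

lemma madj_diff: "madj (A - B) = madj A - madj B"
  by (simp add: madj_def vec_eq_iff)

lemma madj_scaleR: "madj (r *\<^sub>R A) = r *\<^sub>R madj A"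
  by (simp add: madj_def vec_eq_iff)

lemma madj_matrix_unit: "madj (matrix_unit p q) = matrix_unit q p"
  by (auto simp add: madj_def matrix_unit_def vec_eq_iff)

lemma tensor_matrix_mult: "tensor A B ** tensor C D = tensor (A ** C) (B ** D)"
  by (simp add: tensor_def matrix_matrix_mult_def vec_eq_iff sum_UNIV_prod sum_product mult_ac)

lemma madj_tensor: "madj (tensor A B) = tensor (madj A) (madj B)"
  by (simp add: tensor_def madj_def vec_eq_iff)

lemma mtrace_tensor: "mtrace (tensor A B) = mtrace A * mtrace B"
  by (simp add: mtrace_def tensor_def sum_UNIV_prod sum_product)

lemma tensor_diff_left: "tensor (A - B) C = tensor A C - tensor B C"
  by (simp add: tensor_def vec_eq_iff left_diff_distrib)

lemma tensor_diff_right: "tensor C (A - B) = tensor C A - tensor C B"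
  by (simp add: tensor_def vec_eq_iff right_diff_distrib)

lemma tensor_scaleR_left: "tensor (r *\<^sub>R A) C = r *\<^sub>R tensor A C"
  by (simp add: tensor_def vec_eq_iff scaleR_complex mult_ac)

lemma tensor_scaleR_right: "tensor C (r *\<^sub>R A) = r *\<^sub>R tensor C A"
  by (simp add: tensor_def vec_eq_iff scaleR_complex mult_ac)

lemma mtrace_ptraceB: "mtrace (ptraceB R) = mtrace R"
  by (simp add: mtrace_def ptraceB_def sum_UNIV_prod)

lemma mtrace_ptraceA: "mtrace (ptraceA R) = mtrace R"
  by (simp add: mtrace_def ptraceA_def sum_UNIV_prod) (rule sum.swap)

lemma mtrace_mult_tensor_id_right: "mtrace (R ** tensor X (mat 1)) = mtrace (ptraceB R ** X)"
  by (simp add: mtrace_matrix_mult tensor_def ptraceB_def mat_def sum_UNIV_prod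
      sum_distrib_right sum_if_const_cond) (rule sum.cong[OF refl], rule sum.swap)

lemma mtrace_mult_tensor_id_left: "mtrace (R ** tensor (mat 1) Y) = mtrace (ptraceA R ** Y)"
proof -
  have "(\<Sum>a\<in>UNIV. \<Sum>b\<in>UNIV. \<Sum>c\<in>UNIV. R $ (a, b) $ (a, c) * Y $ c $ b)
     = (\<Sum>b\<in>UNIV. \<Sum>c\<in>UNIV. \<Sum>a\<in>UNIV. R $ (a, b) $ (a, c) * Y $ c $ b)"
    by (subst sum.swap) (rule sum.cong[OF refl], rule sum.swap)
  then show ?thesis
    by (simp add: mtrace_matrix_mult tensor_def ptraceA_def mat_def sum_UNIV_prod
        sum_distrib_right sum_if_const_cond)
qed

lemma mtrace_mult_tensor_mat_left: "mtrace (R ** tensor (mat a) W) = a * mtrace (R ** tensor (mat 1) W)"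
  unfolding mtrace_matrix_mult by (simp add: tensor_def mat_def sum_distrib_left mult_ac cong: if_cong)

lemma mtrace_mult_tensor_mat_right: "mtrace (R ** tensor W (mat a)) = a * mtrace (R ** tensor W (mat 1))"
  unfolding mtrace_matrix_mult by (simp add: tensor_def mat_def sum_distrib_left mult_ac cong: if_cong)

lemma mtrace_mult_tensor_matrix_units: "mtrace (R ** tensor (matrix_unit k i) (matrix_unit l j)) = R$(i,j)$(k,l)"
  unfolding mtrace_matrix_mult
  by (simp add: tensor_def matrix_unit_def sum_UNIV_prod if_conj_zero sum_if_const_cond cong: if_cong)

lemma mtrace_mult_tensor_centred_units:
  "mtrace (R ** tensor (matrix_unit k i - mat a) (matrix_unit l j - mat c)) =
   R$(i,j)$(k,l) - c * ptraceB R $ i $ k - a * ptraceA R $ j $ l + a * c * mtrace R"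
proof -
  have 1: "mtrace (R ** tensor (matrix_unit k i) (mat c)) = c * ptraceB R $ i $ k"
    by (subst mtrace_mult_tensor_mat_right) (simp add: mtrace_mult_tensor_id_right mtrace_mult_matrix_unit)
  have 2: "mtrace (R ** tensor (mat a) (matrix_unit l j)) = a * ptraceA R $ j $ l"
    by (subst mtrace_mult_tensor_mat_left) (simp add: mtrace_mult_tensor_id_left mtrace_mult_matrix_unit)
  have 3: "mtrace (R ** tensor (mat a) (mat c)) = a * c * mtrace R"
    by (subst mtrace_mult_tensor_mat_left, subst mtrace_mult_tensor_mat_right)
      (simp add: mtrace_mult_tensor_id_right mtrace_ptraceB)
  show ?thesis
    by (simp only: tensor_diff_left tensor_diff_right mtrace_mult_diff mtrace_mult_tensor_matrix_units 1 2 3)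
      (simp add: algebra_simps)
qed

section \<open>Positive semidefinite matrices\<close>

definition sesq :: "complex^'n^'n \<Rightarrow> ('n::finite \<Rightarrow> complex) \<Rightarrow> ('n \<Rightarrow> complex) \<Rightarrow> complex" where
  "sesq M x y = (\<Sum>i\<in>UNIV. \<Sum>j\<in>UNIV. cnj (x i) * M$i$j * y j)"

lemma psd_iff_sesq: "psd M \<longleftrightarrow> (\<forall>v. Im (sesq M v v) = 0 \<and> Re (sesq M v v) \<ge> 0)"
proof
  assume "psd M"
  show "\<forall>v. Im (sesq M v v) = 0 \<and> Re (sesq M v v) \<ge> 0"
  proof
    fix v :: "'a \<Rightarrow> complex"
    from \<open>psd M\<close> have "let q = (\<Sum>i\<in>UNIV. \<Sum>j\<in>UNIV. cnj ((\<chi> i. v i) $ i) * M $ i $ j * (\<chi> i. v i) $ j)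
      in Im q = 0 \<and> Re q \<ge> 0" unfolding psd_def by blast
    then show "Im (sesq M v v) = 0 \<and> Re (sesq M v v) \<ge> 0" by (simp add: sesq_def Let_def)
  qed
next
  assume "\<forall>v. Im (sesq M v v) = 0 \<and> Re (sesq M v v) \<ge> 0"
  then show "psd M"
    unfolding psd_def by (metis (no_types) sesq_def)
qed

lemma sesq_add_left: "sesq M (\<lambda>k. x k + y k) z = sesq M x z + sesq M y z"
  by (simp add: sesq_def ring_distribs sum.distrib)

lemma sesq_add_right: "sesq M z (\<lambda>k. x k + y k) = sesq M z x + sesq M z y"
  by (simp add: sesq_def ring_distribs sum.distrib)

lemma sesq_mult_left: "sesq M (\<lambda>k. c * x k) z = cnj c * sesq M x z"
  by (simp add: sesq_def sum_distrib_left mult_ac)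

lemma sesq_mult_right: "sesq M z (\<lambda>k. c * x k) = c * sesq M z x"
  by (simp add: sesq_def sum_distrib_left mult_ac)

lemma sesq_unit_vector_left: "sesq M (\<lambda>k. if k = p then 1 else 0) v = (\<Sum>l\<in>UNIV. M$p$l * v l)"
  by (simp add: sesq_def if_distrib[of cnj] sum_if_const_cond cong: if_cong)

lemma sesq_unit_vectors: "sesq M (\<lambda>k. if k = i then 1 else 0) (\<lambda>k. if k = j then 1 else 0) = M$i$j"
  by (simp add: sesq_unit_vector_left)

lemma psd_diag: assumes "psd M" shows "Im (M$p$p) = 0" "Re (M$p$p) \<ge> 0"
  using assms unfolding psd_iff_sesq by (metis sesq_unit_vectors)+

text \<open>Polarisation with the vectors \<open>e\<^sub>i + e\<^sub>j\<close> and \<open>e\<^sub>i + \<i> e\<^sub>j\<close>.\<close>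
lemma psd_hermitian:
  assumes "psd M" shows "M$j$i = cnj (M$i$j)"
proof -
  let ?e = "\<lambda>i k. if k = i then (1::complex) else 0"
  have real: "\<And>v. Im (sesq M v v) = 0" using assms psd_iff_sesq by blast
  have "sesq M (\<lambda>k. ?e i k + ?e j k) (\<lambda>k. ?e i k + ?e j k) = M$i$i + M$i$j + M$j$i + M$j$j"
    by (simp only: sesq_add_left sesq_add_right sesq_unit_vectors) simp
  then have "Im (M$i$j) + Im (M$j$i) = 0"
    using real[of "\<lambda>k. ?e i k + ?e j k"] psd_diag(1)[OF assms, of i] psd_diag(1)[OF assms, of j] by simp
  moreover have "sesq M (\<lambda>k. ?e i k + \<i> * ?e j k) (\<lambda>k. ?e i k + \<i> * ?e j k)
      = M$i$i + \<i> * M$i$j - \<i> * M$j$i + M$j$j"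
    by (simp only: sesq_add_left sesq_add_right sesq_unit_vectors sesq_mult_left sesq_mult_right) simp
  then have "Re (M$i$j) - Re (M$j$i) = 0"
    using real[of "\<lambda>k. ?e i k + \<i> * ?e j k"] psd_diag(1)[OF assms, of i] psd_diag(1)[OF assms, of j] by simp
  ultimately show ?thesis by (simp add: complex_eq_iff)
qed

lemma sesq_swap: assumes "psd M" shows "sesq M y x = cnj (sesq M x y)"
proof -
  have c: "\<And>i j. cnj (M$i$j) = M$j$i" using psd_hermitian[OF assms] by (metis complex_cnj_cnj)
  have "cnj (sesq M x y) = (\<Sum>i\<in>UNIV. \<Sum>j\<in>UNIV. x i * M$j$i * cnj (y j))"
    by (simp add: sesq_def c mult_ac)
  also have "\<dots> = (\<Sum>j\<in>UNIV. \<Sum>i\<in>UNIV. x i * M$j$i * cnj (y j))" by (rule sum.swap)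
  also have "\<dots> = sesq M y x" by (simp add: sesq_def mult_ac)
  finally show ?thesis by simp
qed

lemma cauchy_schwarz_from_quadratic:
  fixes A B :: real and z :: complex
  assumes "A \<ge> 0" "B \<ge> 0" and nonneg: "\<And>c. 0 \<le> A + 2 * Re (c * z) + (cmod c)^2 * B"
  shows "(cmod z)^2 \<le> A * B"
proof (cases "B > 0")
  case True
  define c where "c = - cnj z / complex_of_real B"
  have "c * z = - complex_of_real ((cmod z)^2 / B)"
    unfolding c_def by (simp add: complex_norm_square[symmetric] mult.commute)
  then have 1: "Re (c * z) = - ((cmod z)^2 / B)" by simp
  have 2: "(cmod c)^2 * B = (cmod z)^2 / B"
    using True unfolding c_def by (simp add: norm_divide power_divide power2_eq_square)
  have "0 \<le> A - (cmod z)^2 / B" using nonneg[of c] 1 2 by simp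
  then show ?thesis using True by (simp add: field_simps)
next
  case False
  then have B0: "B = 0" using assms by simp
  show ?thesis
  proof (rule ccontr)
    assume "\<not> ?thesis"
    then have zpos: "(cmod z)^2 > 0" using B0 by simp
    define c where "c = complex_of_real (- (A+1) / (2 * (cmod z)^2)) * cnj z"
    have "cnj z * z = complex_of_real ((cmod z)^2)" by (metis complex_norm_square mult.commute)
    then have "c * z = complex_of_real (- (A+1) / (2 * (cmod z)^2) * (cmod z)^2)"
      unfolding c_def by (simp only: mult.assoc of_real_mult)
    also have "\<dots> = complex_of_real (- (A+1) / 2)"
      using zpos by simp
    finally have "Re (c * z) = - (A+1)/2" by (simp only: Re_complex_of_real)
    then show False using nonneg[of c] B0 by simp
  qed
qed

lemma sesq_expand_Re:
  assumes "psd M"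
  shows "Re (sesq M (\<lambda>k. x k + c * y k) (\<lambda>k. x k + c * y k))
       = Re (sesq M x x) + 2 * Re (c * sesq M x y) + (cmod c)^2 * Re (sesq M y y)"
proof -
  have e: "sesq M (\<lambda>k. x k + c * y k) (\<lambda>k. x k + c * y k)
      = sesq M x x + c * sesq M x y + cnj c * sesq M y x + (cnj c * c) * sesq M y y"
    by (simp only: sesq_add_left sesq_add_right sesq_mult_left sesq_mult_right distrib_left
        add.assoc mult.assoc)
  have "cnj c * c = complex_of_real ((cmod c)^2)" by (metis complex_norm_square mult.commute)
  then show ?thesis unfolding e sesq_swap[OF assms, of y x] by simp
qed

lemma psd_cauchy_schwarz:
  assumes "psd M" shows "(cmod (sesq M x y))^2 \<le> Re (sesq M x x) * Re (sesq M y y)"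
proof (rule cauchy_schwarz_from_quadratic)
  have P: "\<And>v. Im (sesq M v v) = 0 \<and> Re (sesq M v v) \<ge> 0" using assms psd_iff_sesq by blast
  then show "0 \<le> Re (sesq M x x)" "0 \<le> Re (sesq M y y)" by auto
  fix c
  show "0 \<le> Re (sesq M x x) + 2 * Re (c * sesq M x y) + (cmod c)^2 * Re (sesq M y y)"
    using P unfolding sesq_expand_Re[OF assms, symmetric] by blast
qed

lemma psd_entry_cauchy_schwarz:
  assumes "psd M" shows "(cmod (M$i$j))^2 \<le> Re (M$i$i) * Re (M$j$j)"
  using psd_cauchy_schwarz[OF assms, of "\<lambda>k. if k = i then 1 else 0" "\<lambda>k. if k = j then 1 else 0"]
  by (simp add: sesq_unit_vectors)

lemma density_diag_le_1: assumes "density M" shows "Re (M$p$p) \<le> 1"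
proof -
  have "Re (M$p$p) \<le> (\<Sum>r\<in>UNIV. Re (M$r$r))"
    by (rule member_le_sum) (use assms psd_diag(2) in \<open>auto simp: density_def\<close>)
  also have "\<dots> = 1" using assms by (simp add: density_def mtrace_def flip: Re_sum)
  finally show ?thesis .
qed

lemma density_entry_le_1: assumes "density A" shows "cmod (A$i$j) \<le> 1"
proof -
  have psd: "psd A" using assms by (simp add: density_def)
  have "(cmod (A$i$j))^2 \<le> Re (A$i$i) * Re (A$j$j)" by (rule psd_entry_cauchy_schwarz[OF psd])
  also have "\<dots> \<le> 1 * 1"
    by (rule mult_mono) (use density_diag_le_1[OF assms] psd_diag(2)[OF psd] in auto)
  finally show ?thesis using power2_le_imp_le[of "cmod (A$i$j)" 1] by simp
qed

lemma psd_row_zero_if_diag_zero: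
  assumes "psd M" "M$p$p = 0" shows "M$p$j = 0"
  using psd_entry_cauchy_schwarz[OF assms(1), of p j] assms(2) by simp

text \<open>One step of the Cholesky decomposition: subtracting \<open>w w\<^sup>\<dagger>\<close>, where \<open>w\<close> is the \<open>p\<close>-th column
scaled by \<open>1/\<surd>M\<^sub>p\<^sub>p\<close>, keeps \<open>M\<close> positive (by Cauchy-Schwarz) and clears row and column \<open>p\<close>.\<close>
lemma psd_rank_one_reduction:
  assumes psd: "psd M" and diag: "M$p$p \<noteq> 0"
  defines "w \<equiv> \<lambda>j. M$j$p / complex_of_real (sqrt (Re (M$p$p)))"
  defines "M' \<equiv> \<chi> j l. M$j$l - w j * cnj (w l)"
  shows "psd M'" "M'$p$l = 0" "M'$j$p = 0"
proof -
  define s where "s = sqrt (Re (M$p$p))"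
  have herm: "\<And>j l. M$j$l = cnj (M$l$j)" by (rule psd_hermitian[OF psd])
  have dpos: "Re (M$p$p) > 0"
    using diag psd_diag[OF psd, of p] by (simp add: complex_eq_iff less_le)
  have spos: "s > 0" using dpos by (simp add: s_def)
  have ss: "M$p$p = complex_of_real s * complex_of_real s"
    using psd_diag(1)[OF psd, of p] dpos by (simp add: s_def complex_eq_iff flip: of_real_mult)
  have w: "w j = M$j$p / complex_of_real s" for j by (simp add: w_def s_def)
  have cw: "cnj (w l) = M$p$l / complex_of_real s" for l
    unfolding w by (simp add: herm[of p l])
  have wp: "w p = complex_of_real s" unfolding w ss using spos by simp
  show "psd M'"
    unfolding psd_iff_sesq
  proof
    fix v
    define g where "g = (\<Sum>l\<in>UNIV. M$p$l * v l)"
    have "sesq M' v v = sesq M v v - (\<Sum>i\<in>UNIV. \<Sum>j\<in>UNIV. cnj (v i) * (w i * cnj (w j)) * v j)"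
      by (simp add: sesq_def M'_def right_diff_distrib left_diff_distrib sum_subtractf)
    also have "(\<Sum>i\<in>UNIV. \<Sum>j\<in>UNIV. cnj (v i) * (w i * cnj (w j)) * v j)
        = (\<Sum>i\<in>UNIV. cnj (v i) * w i) * (\<Sum>l\<in>UNIV. cnj (w l) * v l)"
      unfolding sum_product by (simp add: mult.assoc)
    also have "(\<Sum>l\<in>UNIV. cnj (w l) * v l) = g / complex_of_real s"
      unfolding cw g_def by (simp add: sum_divide_distrib)
    also have "(\<Sum>i\<in>UNIV. cnj (v i) * w i) = cnj (g / complex_of_real s)"
      unfolding g_def w by (simp add: sum_divide_distrib mult.commute herm[of _ p, symmetric])
    also have "cnj (g / complex_of_real s) * (g / complex_of_real s) = complex_of_real ((cmod g)^2 / s^2)"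
      by (simp add: complex_norm_square[symmetric] power_divide mult.commute power2_eq_square)
    finally have e: "sesq M' v v = sesq M v v - complex_of_real ((cmod g)^2 / s^2)" .
    have "(cmod g)^2 \<le> Re (M$p$p) * Re (sesq M v v)"
      using psd_cauchy_schwarz[OF psd, of "\<lambda>k. if k = p then 1 else 0" v]
      by (simp add: sesq_unit_vectors sesq_unit_vector_left g_def)
    then have "(cmod g)^2 / s^2 \<le> Re (sesq M v v)"
      using dpos spos by (simp add: s_def field_simps)
    then show "Im (sesq M' v v) = 0 \<and> Re (sesq M' v v) \<ge> 0"
      using psd unfolding e psd_iff_sesq by simp
  qed
  show "M'$p$l = 0" unfolding M'_def using wp cw spos by simp
  show "M'$j$p = 0" unfolding M'_def using wp spos by (simp add: cw ss w)
qed

lemma psd_gram_on: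
  assumes "finite S"
  shows "psd M \<Longrightarrow> (\<And>j l. j \<notin> S \<or> l \<notin> S \<Longrightarrow> M$j$l = 0) \<Longrightarrow>
     \<exists>(n::nat) u. \<forall>j l. M$j$l = (\<Sum>m<n. u m j * cnj (u m l))"
  using assms
proof (induction S arbitrary: M rule: finite_induct)
  case empty
  then show ?case by (intro exI[where x="0::nat"]) simp
next
  case (insert p S M)
  have herm: "\<And>j l. M$j$l = cnj (M$l$j)" by (rule psd_hermitian[OF insert.prems(1)])
  have outside: "M$j$l = 0" if "j \<notin> insert p S \<or> l \<notin> insert p S" for j l
    using insert.prems(2) that by blast
  show ?case
  proof (cases "M$p$p = 0")
    case True
    have "M$p$j = 0" "M$j$p = 0" for j
      using psd_row_zero_if_diag_zero[OF insert.prems(1) True] herm by (metis complex_cnj_zero)+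
    then have "M$j$l = 0" if "j \<notin> S \<or> l \<notin> S" for j l
      using that outside[of j l] by (cases "j = p \<or> l = p") auto
    then show ?thesis using insert.IH[OF insert.prems(1)] by blast
  next
    case False
    define w where "w j = M$j$p / complex_of_real (sqrt (Re (M$p$p)))" for j
    define M' where "M' = (\<chi> j l. M$j$l - w j * cnj (w l))"
    note reduction = psd_rank_one_reduction[OF insert.prems(1) False, folded w_def, folded M'_def]
    have "M'$j$l = 0" if "j \<notin> S \<or> l \<notin> S" for j l
    proof (cases "j = p \<or> l = p")
      case True
      then show ?thesis using reduction(2,3) by blast
    next
      case False
      then show ?thesis using that outside[of j l] outside[of j p] outside[of p l]
        by (auto simp: M'_def w_def herm[of p l])
    qed
    then obtain n :: nat and u where u: "\<forall>j l. M'$j$l = (\<Sum>m<n. u m j * cnj (u m l))"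
      using insert.IH[OF reduction(1)] by blast
    define u' where "u' m = (if m < n then u m else w)" for m
    have "M$j$l = (\<Sum>m<Suc n. u' m j * cnj (u' m l))" for j l
    proof -
      have "M$j$l = M'$j$l + w j * cnj (w l)" unfolding M'_def by simp
      also have "\<dots> = (\<Sum>m<n. u' m j * cnj (u' m l)) + u' n j * cnj (u' n l)"
        using u by (simp add: u'_def)
      finally show ?thesis by simp
    qed
    then show ?thesis by blast
  qed
qed

lemma psd_gram:
  "psd (M::complex^'n::finite^'n) \<Longrightarrow> \<exists>(n::nat) u. \<forall>j l. M$j$l = (\<Sum>m<n. u m j * cnj (u m l))"
  using psd_gram_on[of "UNIV::'n set" M] by simp

lemma sum4_separate:
  fixes f :: "'a::finite \<Rightarrow> 'b::finite \<Rightarrow> complex" and g :: "'c::finite \<Rightarrow> 'd::finite \<Rightarrow> complex"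
  shows "(\<Sum>a\<in>UNIV. \<Sum>b\<in>UNIV. \<Sum>c\<in>UNIV. \<Sum>d\<in>UNIV. f a b * A a c * g c d) =
    (\<Sum>a\<in>UNIV. \<Sum>c\<in>UNIV. (\<Sum>b\<in>UNIV. f a b) * A a c * (\<Sum>d\<in>UNIV. g c d))"
proof -
  have "(\<Sum>a\<in>UNIV. \<Sum>c\<in>UNIV. (\<Sum>b\<in>UNIV. f a b) * A a c * (\<Sum>d\<in>UNIV. g c d)) =
     (\<Sum>a\<in>UNIV. \<Sum>c\<in>UNIV. \<Sum>b\<in>UNIV. \<Sum>d\<in>UNIV. f a b * A a c * g c d)"
    by (simp only: sum_distrib_left sum_distrib_right)
      (rule sum.cong[OF refl], rule sum.cong[OF refl], rule sum.swap)
  also have "\<dots> = (\<Sum>a\<in>UNIV. \<Sum>b\<in>UNIV. \<Sum>c\<in>UNIV. \<Sum>d\<in>UNIV. f a b * A a c * g c d)"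
    by (rule sum.cong[OF refl], rule sum.swap)
  finally show ?thesis by simp
qed

text \<open>With \<open>B = \<Sum>\<^sub>m u\<^sub>m u\<^sub>m\<^sup>\<dagger>\<close>, the form of \<open>A \<otimes> B\<close> at \<open>v\<close> is \<open>\<Sum>\<^sub>m\<close> of the form of \<open>A\<close> at the
partial contractions \<open>\<alpha>\<^sub>m = \<langle>u\<^sub>m|v\<rangle>\<^sub>B\<close>.\<close>
lemma psd_tensor:
  fixes A :: "complex^'a::finite^'a" and B :: "complex^'b::finite^'b"
  assumes "psd A" "psd B" shows "psd (tensor A B)"
proof -
  obtain n :: nat and u where u: "\<forall>j l. B$j$l = (\<Sum>m<n. u m j * cnj (u m l))"
    using psd_gram[OF assms(2)] by blast
  show ?thesis unfolding psd_iff_sesq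
  proof
    fix v :: "'a \<times> 'b \<Rightarrow> complex"
    define \<alpha> where "\<alpha> m c = (\<Sum>d\<in>UNIV. cnj (u m d) * v (c,d))" for m c
    have "sesq (tensor A B) v v = (\<Sum>a\<in>UNIV. \<Sum>b\<in>UNIV. \<Sum>c\<in>UNIV. \<Sum>d\<in>UNIV. \<Sum>m<n.
        cnj (v (a,b)) * A$a$c * (u m b * cnj (u m d)) * v (c,d))"
      by (simp add: sesq_def tensor_def sum_UNIV_prod u sum_distrib_left sum_distrib_right mult_ac)
    also have "\<dots> = (\<Sum>m<n. \<Sum>a\<in>UNIV. \<Sum>b\<in>UNIV. \<Sum>c\<in>UNIV. \<Sum>d\<in>UNIV.
        (cnj (v (a,b)) * u m b) * A$a$c * (cnj (u m d) * v (c,d)))"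
      by (simp only: sum.swap[where B="{..<n}"]) (simp add: mult_ac)
    also have "\<dots> = (\<Sum>m<n. sesq A (\<alpha> m) (\<alpha> m))"
      by (simp only: sum4_separate) (simp add: sesq_def \<alpha>_def mult_ac)
    finally have e: "sesq (tensor A B) v v = (\<Sum>m<n. sesq A (\<alpha> m) (\<alpha> m))" .
    show "Im (sesq (tensor A B) v v) = 0 \<and> Re (sesq (tensor A B) v v) \<ge> 0"
      using assms(1) unfolding e psd_iff_sesq by (auto simp: Im_sum Re_sum intro: sum_nonneg)
  qed
qed

lemma density_tensor: "density A \<Longrightarrow> density B \<Longrightarrow> density (tensor A B)"
  by (simp add: density_def psd_tensor mtrace_tensor)

lemma psd_ptraceB:
  fixes R :: "complex^('a::finite\<times>'b::finite)^('a\<times>'b)"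
  assumes "psd R" shows "psd (ptraceB R)"
  unfolding psd_iff_sesq
proof
  fix v :: "'a \<Rightarrow> complex"
  define w where "w (b::'b) (x::'a\<times>'b) = (if snd x = b then v (fst x) else 0)" for b x
  have "(\<Sum>b\<in>UNIV. sesq R (w b) (w b)) = (\<Sum>b\<in>UNIV. \<Sum>a\<in>UNIV. \<Sum>c\<in>UNIV. cnj (v a) * R$(a,b)$(c,b) * v c)"
    by (simp add: sesq_def w_def sum_UNIV_prod if_distrib[of cnj] sum_if_const_cond cong: if_cong)
  also have "\<dots> = (\<Sum>a\<in>UNIV. \<Sum>c\<in>UNIV. \<Sum>b\<in>UNIV. cnj (v a) * R$(a,b)$(c,b) * v c)"
    by (subst sum.swap) (rule sum.cong[OF refl], rule sum.swap)
  also have "\<dots> = sesq (ptraceB R) v v"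
    by (simp add: sesq_def ptraceB_def sum_distrib_left sum_distrib_right)
  finally have e: "sesq (ptraceB R) v v = (\<Sum>b\<in>UNIV. sesq R (w b) (w b))" by simp
  show "Im (sesq (ptraceB R) v v) = 0 \<and> Re (sesq (ptraceB R) v v) \<ge> 0"
    using assms unfolding e psd_iff_sesq by (auto simp: Im_sum Re_sum intro: sum_nonneg)
qed

lemma psd_ptraceA:
  fixes R :: "complex^('a::finite\<times>'b::finite)^('a\<times>'b)"
  assumes "psd R" shows "psd (ptraceA R)"
  unfolding psd_iff_sesq
proof
  fix v :: "'b \<Rightarrow> complex"
  define w where "w (a::'a) (x::'a\<times>'b) = (if fst x = a then v (snd x) else 0)" for a x
  have "(\<Sum>a\<in>UNIV. sesq R (w a) (w a)) = (\<Sum>a\<in>UNIV. \<Sum>b\<in>UNIV. \<Sum>d\<in>UNIV. cnj (v b) * R$(a,b)$(a,d) * v d)"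
    by (simp add: sesq_def w_def sum_UNIV_prod if_distrib[of cnj] sum_if_const_cond cong: if_cong)
  also have "\<dots> = (\<Sum>b\<in>UNIV. \<Sum>d\<in>UNIV. \<Sum>a\<in>UNIV. cnj (v b) * R$(a,b)$(a,d) * v d)"
    by (subst sum.swap) (rule sum.cong[OF refl], rule sum.swap)
  also have "\<dots> = sesq (ptraceA R) v v"
    by (simp add: sesq_def ptraceA_def sum_distrib_left sum_distrib_right)
  finally have e: "sesq (ptraceA R) v v = (\<Sum>a\<in>UNIV. sesq R (w a) (w a))" by simp
  show "Im (sesq (ptraceA R) v v) = 0 \<and> Re (sesq (ptraceA R) v v) \<ge> 0"
    using assms unfolding e psd_iff_sesq by (auto simp: Im_sum Re_sum intro: sum_nonneg)
qed

lemma density_ptraceB: "density R \<Longrightarrow> density (ptraceB R)"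
  by (simp add: density_def psd_ptraceB mtrace_ptraceB)

lemma density_ptraceA: "density R \<Longrightarrow> density (ptraceA R)"
  by (simp add: density_def psd_ptraceA mtrace_ptraceA)

section \<open>The trace form and maximal correlation\<close>

definition trace_form :: "complex^'n^'n \<Rightarrow> complex^'n^'n \<Rightarrow> complex^'n::finite^'n \<Rightarrow> complex" where
  "trace_form M P Q = mtrace (M ** (P ** madj Q))"

lemma trace_form_eq_sum_sesq: "trace_form M P Q = (\<Sum>k\<in>UNIV. sesq M (\<lambda>r. Q$r$k) (\<lambda>s. P$s$k))"
proof -
  have "trace_form M P Q = (\<Sum>i\<in>UNIV. \<Sum>j\<in>UNIV. \<Sum>k\<in>UNIV. cnj (Q$i$k) * M$i$j * P$j$k)"
    by (simp add: trace_form_def mtrace_def matrix_matrix_mult_def madj_def sum_distrib_left mult_ac)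
  also have "\<dots> = (\<Sum>k\<in>UNIV. \<Sum>i\<in>UNIV. \<Sum>j\<in>UNIV. cnj (Q$i$k) * M$i$j * P$j$k)"
    by (subst sum.swap) (rule sum.cong[OF refl], rule sum.swap)
  finally show ?thesis by (simp add: sesq_def)
qed

lemma trace_form_psd: assumes "psd M" shows "Im (trace_form M P P) = 0" "Re (trace_form M P P) \<ge> 0"
  using assms unfolding trace_form_eq_sum_sesq psd_iff_sesq by (auto simp: Im_sum Re_sum intro: sum_nonneg)

lemma trace_form_cauchy_schwarz:
  assumes "psd M" shows "(cmod (trace_form M P Q))^2 \<le> Re (trace_form M P P) * Re (trace_form M Q Q)"
proof -
  have "(cmod (trace_form M P Q))^2 \<le> Re (trace_form M Q Q) * Re (trace_form M P P)"
  proof (rule cauchy_schwarz_from_quadratic)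
    show "0 \<le> Re (trace_form M Q Q)" "0 \<le> Re (trace_form M P P)" using trace_form_psd[OF assms] by auto
    fix c
    have "0 \<le> (\<Sum>k\<in>UNIV. Re (sesq M (\<lambda>r. Q$r$k + c * P$r$k) (\<lambda>r. Q$r$k + c * P$r$k)))"
      using assms unfolding psd_iff_sesq by (auto intro: sum_nonneg)
    also have "\<dots> = Re (trace_form M Q Q) + 2 * Re (c * trace_form M P Q) + (cmod c)^2 * Re (trace_form M P P)"
      by (simp add: sesq_expand_Re[OF assms] trace_form_eq_sum_sesq sum.distrib Re_sum sum_distrib_left)
    finally show "0 \<le> Re (trace_form M Q Q) + 2 * Re (c * trace_form M P Q) + (cmod c)^2 * Re (trace_form M P P)" .
  qed
  then show ?thesis by (simp add: mult.commute)
qed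

lemma trace_form_centred_matrix_unit:
  assumes "psd M" "mtrace M = 1"
  shows "trace_form M (matrix_unit p q - mat (M$q$p)) (matrix_unit p q - mat (M$q$p))
    = M$p$p - of_real ((cmod (M$q$p))^2)"
proof -
  have h: "M$p$q = cnj (M$q$p)" by (rule psd_hermitian[OF assms(1)])
  have t: "(\<Sum>r\<in>UNIV. M$r$r) = 1" using assms(2) by (simp add: mtrace_def)
  have "trace_form M (matrix_unit p q - mat (M$q$p)) (matrix_unit p q - mat (M$q$p)) =
     M$p$p - cnj (M$q$p) * M$q$p - M$q$p * M$p$q + M$q$p * cnj (M$q$p) * (\<Sum>r\<in>UNIV. M$r$r)"
    by (simp add: trace_form_def mtrace_def matrix_matrix_mult_def madj_def sum_distrib_left
        matrix_unit_def mat_def algebra_simps sum_subtractf sum.distrib sum_if_const_cond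
        if_distrib[of cnj] if_conj_zero cong: if_cong)
  also have "\<dots> = M$p$p - of_real ((cmod (M$q$p))^2)"
    using complex_norm_square[of "M$q$p", symmetric] unfolding t h by (simp add: mult.commute)
  finally show ?thesis .
qed

lemma correlation_cauchy_schwarz:
  assumes "psd R"
  shows "(cmod (mtrace (R ** tensor X (madj Y))))^2 \<le>
    Re (mtrace (ptraceB R ** (X ** madj X))) * Re (mtrace (ptraceA R ** (Y ** madj Y)))"
proof -
  have "mtrace (R ** tensor X (madj Y)) = trace_form R (tensor X (mat 1)) (tensor (mat 1) Y)"
    "mtrace (ptraceB R ** (X ** madj X)) = trace_form R (tensor X (mat 1)) (tensor X (mat 1))"
    "mtrace (ptraceA R ** (Y ** madj Y)) = trace_form R (tensor (mat 1) Y) (tensor (mat 1) Y)"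
    by (simp_all add: trace_form_def madj_tensor madj_mat tensor_matrix_mult
        mtrace_mult_tensor_id_right mtrace_mult_tensor_id_left)
  then show ?thesis using trace_form_cauchy_schwarz[OF assms] by presburger
qed

lemma maxcorr_bdd_above:
  fixes R :: "complex^('a::finite\<times>'b::finite)^('a\<times>'b)"
  assumes "psd R"
  shows "bdd_above (insert 0 {cmod (mtrace (R ** tensor X (madj Y))) | X Y.
      mtrace (ptraceB R ** X) = 0 \<and> mtrace (ptraceA R ** Y) = 0 \<and>
      mtrace (ptraceB R ** (X ** madj X)) = 1 \<and> mtrace (ptraceA R ** (Y ** madj Y)) = 1})"
proof (rule bdd_aboveI[where M=1], elim insertE CollectE exE conjE)
  fix X Y and x :: real
  assume "x = cmod (mtrace (R ** tensor X (madj Y)))"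
    "mtrace (ptraceB R ** (X ** madj X)) = 1" "mtrace (ptraceA R ** (Y ** madj Y)) = 1"
  then have "x^2 \<le> 1" using correlation_cauchy_schwarz[OF assms, of X Y] by simp
  then show "x \<le> 1" using power2_le_imp_le[of x 1] by simp
qed simp

lemma maxcorr_nonneg: "psd R \<Longrightarrow> maxcorr R \<ge> 0"
  unfolding maxcorr_def by (rule cSup_upper[OF insertI1 maxcorr_bdd_above])

lemma maxcorr_ge:
  assumes "psd R" "mtrace (ptraceB R ** X) = 0" "mtrace (ptraceA R ** Y) = 0"
    "mtrace (ptraceB R ** (X ** madj X)) = 1" "mtrace (ptraceA R ** (Y ** madj Y)) = 1"
  shows "cmod (mtrace (R ** tensor X (madj Y))) \<le> maxcorr R"
  unfolding maxcorr_def
  by (rule cSup_upper[OF _ maxcorr_bdd_above[OF assms(1)]]) (use assms in blast)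

text \<open>Rescale \<open>X\<close> and \<open>Y\<close> to unit norm; if one of them has norm 0, the correlation vanishes by
Cauchy-Schwarz.\<close>
lemma maxcorr_ge_subnormalized:
  assumes psd: "psd R" and centred: "mtrace (ptraceB R ** X) = 0" "mtrace (ptraceA R ** Y) = 0"
    and normX: "Re (mtrace (ptraceB R ** (X ** madj X))) \<le> 1"
    and normY: "Re (mtrace (ptraceA R ** (Y ** madj Y))) \<le> 1"
  shows "cmod (mtrace (R ** tensor X (madj Y))) \<le> maxcorr R"
proof -
  define vX where "vX = mtrace (ptraceB R ** (X ** madj X))"
  define vY where "vY = mtrace (ptraceA R ** (Y ** madj Y))"
  have vXr: "Im vX = 0" "Re vX \<ge> 0"
    using trace_form_psd[OF psd_ptraceB[OF psd], of X] unfolding vX_def trace_form_def by auto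
  have vYr: "Im vY = 0" "Re vY \<ge> 0"
    using trace_form_psd[OF psd_ptraceA[OF psd], of Y] unfolding vY_def trace_form_def by auto
  have cs: "(cmod (mtrace (R ** tensor X (madj Y))))^2 \<le> Re vX * Re vY"
    unfolding vX_def vY_def by (rule correlation_cauchy_schwarz[OF psd])
  have mnn: "maxcorr R \<ge> 0" by (rule maxcorr_nonneg[OF psd])
  show ?thesis
  proof (cases "Re vX = 0 \<or> Re vY = 0")
    case True
    then show ?thesis using cs mnn by auto
  next
    case False
    define sx where "sx = sqrt (Re vX)"
    define sy where "sy = sqrt (Re vY)"
    have sx: "sx > 0" "sx \<le> 1" using False vXr normX by (auto simp: sx_def vX_def)
    have sy: "sy > 0" "sy \<le> 1" using False vYr normY by (auto simp: sy_def vY_def)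
    have vXs: "vX = of_real (sx * sx)" using vXr by (simp add: sx_def complex_eq_iff)
    have vYs: "vY = of_real (sy * sy)" using vYr by (simp add: sy_def complex_eq_iff)
    define X' where "X' = (1/sx) *\<^sub>R X"
    define Y' where "Y' = (1/sy) *\<^sub>R Y"
    have "cmod (mtrace (R ** tensor X' (madj Y'))) \<le> maxcorr R"
    proof (rule maxcorr_ge[OF psd])
      show "mtrace (ptraceB R ** X') = 0" "mtrace (ptraceA R ** Y') = 0"
        unfolding X'_def Y'_def mtrace_mult_scaleR centred by simp_all
      show "mtrace (ptraceB R ** (X' ** madj X')) = 1" "mtrace (ptraceA R ** (Y' ** madj Y')) = 1"
        unfolding X'_def Y'_def madj_scaleR matrix_mult_scaleR_scaleR mtrace_mult_scaleR
          vX_def[symmetric] vY_def[symmetric] vXs vYs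
        using sx sy by (simp_all flip: of_real_mult)
    qed
    moreover have "mtrace (R ** tensor X (madj Y)) = of_real (sx * sy) * mtrace (R ** tensor X' (madj Y'))"
      unfolding X'_def Y'_def madj_scaleR tensor_scaleR_left tensor_scaleR_right scaleR_scaleR mtrace_mult_scaleR
      using sx sy by simp
    ultimately have "cmod (mtrace (R ** tensor X (madj Y))) \<le> sx * sy * maxcorr R"
      using sx sy by (simp add: norm_mult mult_left_mono)
    also have "\<dots> \<le> maxcorr R"
      using mnn sx sy mult_right_mono[of "sx * sy" 1 "maxcorr R"] by (simp add: mult_le_one)
    finally show ?thesis .
  qed
qed

text \<open>For a product state \<open>tr((A \<otimes> B)(X \<otimes> Y\<^sup>\<dagger>)) = tr(A X) tr(B Y\<^sup>\<dagger>)\<close>, and \<open>tr(A X) = 0\<close> for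
every feasible \<open>X\<close>.\<close>
lemma maxcorr_tensor:
  assumes "density A" "density B"
  shows "maxcorr (tensor A B) = 0"
proof -
  have "ptraceB (tensor A B) = A" using assms(2)
    by (simp add: ptraceB_def tensor_def vec_eq_iff density_def mtrace_def flip: sum_distrib_left)
  then have "insert 0 {cmod (mtrace (tensor A B ** tensor X (madj Y))) | X Y.
      mtrace (ptraceB (tensor A B) ** X) = 0 \<and> mtrace (ptraceA (tensor A B) ** Y) = 0 \<and>
      mtrace (ptraceB (tensor A B) ** (X ** madj X)) = 1 \<and>
      mtrace (ptraceA (tensor A B) ** (Y ** madj Y)) = 1} = {0}"
    by (auto simp: tensor_matrix_mult mtrace_tensor)
  then show ?thesis unfolding maxcorr_def by (metis cSup_singleton)
qed

text \<open>The witnesses are the centred matrix units \<open>X = |k\<rangle>\<langle>i| - \<langle>i|\<tau>\<^sub>A|k\<rangle>\<close> and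
\<open>Y = |j\<rangle>\<langle>l| - \<langle>l|\<tau>\<^sub>B|j\<rangle>\<close>, whose norms \<open>(\<tau>\<^sub>A)\<^sub>k\<^sub>k - |(\<tau>\<^sub>A)\<^sub>i\<^sub>k|\<^sup>2\<close> and
\<open>(\<tau>\<^sub>B)\<^sub>j\<^sub>j - |(\<tau>\<^sub>B)\<^sub>l\<^sub>j|\<^sup>2\<close> are at most 1.\<close>
lemma entry_diff_tensor_ptrace_le_maxcorr:
  fixes \<tau> :: "complex^('a::finite\<times>'b::finite)^('a\<times>'b)"
  assumes dens: "density \<tau>"
  shows "cmod (\<tau>$(i,j)$(k,l) - ptraceB \<tau> $ i $ k * ptraceA \<tau> $ j $ l) \<le> maxcorr \<tau>"
proof -
  let ?A = "ptraceB \<tau>" and ?B = "ptraceA \<tau>"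
  have psd: "psd \<tau>" and tr: "mtrace \<tau> = 1" using dens by (auto simp: density_def)
  have dA: "density ?A" and dB: "density ?B" using dens density_ptraceB density_ptraceA by blast+
  then have A: "psd ?A" "mtrace ?A = 1" and B: "psd ?B" "mtrace ?B = 1" by (auto simp: density_def)
  define a where "a = ?A $ i $ k"
  define b where "b = ?B $ l $ j"
  define X where "X = matrix_unit k i - mat a"
  define Y where "Y = matrix_unit j l - mat b"
  have cnj_b: "cnj b = ?B $ j $ l" unfolding b_def using psd_hermitian[OF B(1), of j l] by simp
  have madj_Y: "madj Y = matrix_unit l j - mat (cnj b)"
    unfolding Y_def by (simp add: madj_diff madj_matrix_unit madj_mat)
  have "mtrace (\<tau> ** tensor X (madj Y)) = \<tau>$(i,j)$(k,l) - ?A $ i $ k * ?B $ j $ l"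
    unfolding madj_Y X_def mtrace_mult_tensor_centred_units tr a_def cnj_b by (simp add: algebra_simps)
  moreover have "cmod (mtrace (\<tau> ** tensor X (madj Y))) \<le> maxcorr \<tau>"
  proof (rule maxcorr_ge_subnormalized[OF psd])
    show "mtrace (?A ** X) = 0" "mtrace (?B ** Y) = 0"
      unfolding X_def Y_def mtrace_mult_diff mtrace_mult_matrix_unit mtrace_mult_mat A(2) B(2) a_def b_def
      by simp_all
    have "Re (mtrace (?A ** (X ** madj X))) = Re (?A$k$k) - (cmod a)^2"
      using trace_form_centred_matrix_unit[OF A] unfolding trace_form_def X_def a_def by simp
    then show "Re (mtrace (?A ** (X ** madj X))) \<le> 1"
      using density_diag_le_1[OF dA, of k] by (smt (verit) zero_le_power2)
    have "Re (mtrace (?B ** (Y ** madj Y))) = Re (?B$j$j) - (cmod b)^2"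
      using trace_form_centred_matrix_unit[OF B] unfolding trace_form_def Y_def b_def by simp
    then show "Re (mtrace (?B ** (Y ** madj Y))) \<le> 1"
      using density_diag_le_1[OF dB, of j] by (smt (verit) zero_le_power2)
  qed
  ultimately show ?thesis by simp
qed

section \<open>Separable states\<close>

lemma norm_vec_le_sum: "norm (x::'c::real_normed_vector^'n::finite) \<le> (\<Sum>i\<in>UNIV. norm (x$i))"
  by (simp add: norm_vec_def L2_set_le_sum)

lemma norm_matrix_le_sum_entries:
  "norm (M::complex^'n::finite^'m::finite) \<le> (\<Sum>r\<in>UNIV. \<Sum>s\<in>UNIV. cmod (M$r$s))"
  by (rule order_trans[OF norm_vec_le_sum sum_mono[OF norm_vec_le_sum]])

lemma compact_density: "compact {A :: complex^'n::finite^'n. density A}"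
proof -
  have eq: "{A :: complex^'n^'n. density A} =
      (\<Inter>v. {A. Im (\<Sum>i\<in>UNIV. \<Sum>j\<in>UNIV. cnj (v $ i) * A $ i $ j * v $ j) = 0} \<inter>
             {A. 0 \<le> Re (\<Sum>i\<in>UNIV. \<Sum>j\<in>UNIV. cnj (v $ i) * A $ i $ j * v $ j)}) \<inter>
      {A. mtrace A = 1}"
    by (auto simp: density_def psd_def Let_def)
  have "closed {A :: complex^'n^'n. density A}"
    unfolding eq mtrace_def
    by (intro closed_Int closed_INT ballI closed_Collect_eq closed_Collect_le continuous_intros)
  moreover have "norm A \<le> real (CARD('n) * CARD('n))" if "density A" for A :: "complex^'n^'n"
  proof -
    have "norm A \<le> (\<Sum>r\<in>UNIV. \<Sum>s\<in>UNIV. cmod (A$r$s))" by (rule norm_matrix_le_sum_entries)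
    also have "\<dots> \<le> (\<Sum>r\<in>(UNIV::'n set). \<Sum>s\<in>(UNIV::'n set). 1)"
      by (intro sum_mono density_entry_le_1[OF that])
    finally show ?thesis by simp
  qed
  then have "bounded {A :: complex^'n^'n. density A}" unfolding bounded_iff by blast
  ultimately show ?thesis by (simp add: compact_eq_bounded_closed)
qed

definition product_states :: "(complex^('a::finite\<times>'b::finite)^('a\<times>'b)) set" where
  "product_states = {tensor A B | A B. density A \<and> density B}"

lemma compact_product_states:
  "compact (product_states :: (complex^('a::finite\<times>'b::finite)^('a\<times>'b)) set)"
proof -
  have "product_states = (\<lambda>x. tensor (fst x) (snd x)) `
      ({A :: complex^'a^'a. density A} \<times> {B :: complex^'b^'b. density B})"
    unfolding product_states_def by force
  moreover have "compact ((\<lambda>x. tensor (fst x) (snd x)) `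
      ({A :: complex^'a^'a. density A} \<times> {B :: complex^'b^'b. density B}))"
    by (intro compact_continuous_image compact_Times compact_density)
       (unfold tensor_def, intro continuous_intros)
  ultimately show ?thesis by simp
qed

lemma separable_iff_convex_hull_product_states:
  fixes R :: "complex^('a::finite\<times>'b::finite)^('a\<times>'b)"
  shows "separable R \<longleftrightarrow> R \<in> convex hull product_states"
proof
  assume "separable R"
  then obtain n :: nat and p :: "nat \<Rightarrow> real" and tA :: "nat \<Rightarrow> complex^'a^'a" and tB :: "nat \<Rightarrow> complex^'b^'b"
    where h: "\<forall>i<n. p i \<ge> 0 \<and> density (tA i) \<and> density (tB i)" "(\<Sum>i<n. p i) = 1"
      "R = (\<Sum>i<n. p i *\<^sub>R tensor (tA i) (tB i))"
    unfolding separable_def by blast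
  show "R \<in> convex hull product_states"
    unfolding h(3)
  proof (rule convex_sum)
    show "\<And>i. i \<in> {..<n} \<Longrightarrow> tensor (tA i) (tB i) \<in> convex hull product_states"
      using h(1) by (intro hull_inc) (auto simp: product_states_def)
  qed (use h in auto)
next
  assume "R \<in> convex hull product_states"
  then obtain k u x where kux: "\<forall>i\<in>{1::nat..k}. 0 \<le> u i \<and> x i \<in> product_states"
    "sum u {1..k} = 1" "(\<Sum>i = 1..k. u i *\<^sub>R x i) = R"
    unfolding convex_hull_indexed by blast
  have "\<forall>i. \<exists>A B. i \<in> {1..k} \<longrightarrow> density A \<and> density B \<and> x i = tensor A B"
    using kux(1) unfolding product_states_def by blast
  then obtain fA fB where f: "\<And>i. i \<in> {1..k} \<Longrightarrow> density (fA i) \<and> density (fB i) \<and> x i = tensor (fA i) (fB i)"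
    by metis
  have "\<forall>i<k. u (Suc i) \<ge> 0 \<and> density (fA (Suc i)) \<and> density (fB (Suc i))"
    using kux(1) f by auto
  moreover have "(\<Sum>i<k. u (Suc i)) = 1"
    using kux(2) by (simp add: sum.atLeast1_atMost_eq)
  moreover have "R = (\<Sum>i<k. u (Suc i) *\<^sub>R tensor (fA (Suc i)) (fB (Suc i)))"
  proof -
    have "R = (\<Sum>i = Suc 0..k. u i *\<^sub>R x i)" using kux(3) by simp
    also have "\<dots> = (\<Sum>i<k. u (Suc i) *\<^sub>R x (Suc i))" by (rule sum.atLeast1_atMost_eq)
    also have "\<dots> = (\<Sum>i<k. u (Suc i) *\<^sub>R tensor (fA (Suc i)) (fB (Suc i)))"
      by (rule sum.cong[OF refl]) (use f in auto)
    finally show ?thesis .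
  qed
  ultimately show "separable R" unfolding separable_def
    by (intro exI[where x=k] exI[where x="\<lambda>i. u (Suc i)"] exI[where x="\<lambda>i. fA (Suc i)"]
        exI[where x="\<lambda>i. fB (Suc i)"] conjI)
qed

lemma decomposition_weights_sum:
  fixes n :: nat
  assumes "density \<rho>" "\<forall>i<n. density (\<tau> i)" "\<rho> = (\<Sum>i<n. p i *\<^sub>R \<tau> i)"
  shows "(\<Sum>i<n. p i) = 1"
proof -
  have "(\<Sum>i<n. complex_of_real (p i)) = mtrace \<rho>"
    unfolding assms(3) mtrace_scaleR_sum using assms(2) by (simp add: density_def)
  then have "complex_of_real (\<Sum>i<n. p i) = 1"
    using assms(1) by (simp add: density_def flip: of_real_sum)
  then show ?thesis by (simp only: of_real_eq_1_iff)
qed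

lemma maxent_eq_0_iff:
  fixes \<rho> :: "complex^('a::finite\<times>'b::finite)^('a\<times>'b)"
  assumes "density \<rho>"
  shows "maxent \<rho> = 0 \<longleftrightarrow> (\<forall>\<delta>>0. \<exists>(n::nat) p \<tau>.
    (\<forall>i<n. p i \<ge> 0 \<and> density (\<tau> i) \<and> maxcorr (\<tau> i) < \<delta>) \<and> \<rho> = (\<Sum>i<n. p i *\<^sub>R \<tau> i))"
    (is "_ \<longleftrightarrow> (\<forall>\<delta>>0. ?small \<delta>)")
proof -
  define S where "S = {Max ((\<lambda>i. maxcorr (\<tau> i)) ` {..<n}) | (n::nat) p \<tau>.
      (\<forall>i<n. p i \<ge> (0::real) \<and> density (\<tau> i)) \<and> \<rho> = (\<Sum>i<n. p i *\<^sub>R \<tau> i)}"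
  have maxent: "maxent \<rho> = Inf S" unfolding maxent_def S_def ..
  have pos: "n > 0" if "\<forall>i<n. p i \<ge> 0 \<and> density (\<tau> i)" "\<rho> = (\<Sum>i<n. p i *\<^sub>R \<tau> i)"
    for n :: nat and p \<tau>
  proof (rule ccontr)
    assume "\<not> n > 0"
    then have "(\<Sum>i<n. p i) = 0" by simp
    then show False using decomposition_weights_sum[OF assms _ that(2)] that(1) by simp
  qed
  have S_nonneg: "0 \<le> x" if "x \<in> S" for x
  proof -
    obtain n :: nat and p \<tau> where dec: "\<forall>i<n. p i \<ge> 0 \<and> density (\<tau> i)" "\<rho> = (\<Sum>i<n. p i *\<^sub>R \<tau> i)"
      and x: "x = Max ((\<lambda>i. maxcorr (\<tau> i)) ` {..<n})"
      using \<open>x \<in> S\<close> unfolding S_def by blast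
    have "n > 0" by (rule pos[OF dec])
    then have "maxcorr (\<tau> 0) \<le> x" unfolding x by (intro Max_ge) auto
    moreover have "0 \<le> maxcorr (\<tau> 0)" using dec(1) \<open>n > 0\<close> maxcorr_nonneg density_def by blast
    ultimately show ?thesis by linarith
  qed
  have "Max ((\<lambda>i. maxcorr ((\<lambda>_. \<rho>) i)) ` {..<1::nat}) \<in> S"
    unfolding S_def using assms by (intro CollectI exI[where x="1::nat"] exI[where x="\<lambda>_. 1::real"]) auto
  then have S_ne: "S \<noteq> {}" by blast
  have S_bdd: "bdd_below S" using S_nonneg by (intro bdd_belowI[where m=0])
  have small_iff: "(\<exists>x\<in>S. x < \<delta>) \<longleftrightarrow> ?small \<delta>" for \<delta>
  proof
    assume "\<exists>x\<in>S. x < \<delta>"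
    then obtain n :: nat and p \<tau> where dec: "\<forall>i<n. p i \<ge> 0 \<and> density (\<tau> i)" "\<rho> = (\<Sum>i<n. p i *\<^sub>R \<tau> i)"
      and max: "Max ((\<lambda>i. maxcorr (\<tau> i)) ` {..<n}) < \<delta>"
      unfolding S_def by blast
    have "maxcorr (\<tau> i) < \<delta>" if "i < n" for i
    proof -
      have "maxcorr (\<tau> i) \<le> Max ((\<lambda>i. maxcorr (\<tau> i)) ` {..<n})" using that by (intro Max_ge) auto
      then show ?thesis using max by linarith
    qed
    then show "?small \<delta>" using dec by blast
  next
    assume "?small \<delta>"
    then obtain n :: nat and p \<tau> where small: "\<forall>i<n. p i \<ge> 0 \<and> density (\<tau> i) \<and> maxcorr (\<tau> i) < \<delta>"
      and dec: "\<rho> = (\<Sum>i<n. p i *\<^sub>R \<tau> i)"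
      by blast
    then have "n > 0" using pos by blast
    then have "Max ((\<lambda>i. maxcorr (\<tau> i)) ` {..<n}) < \<delta>" using small by (subst Max_less_iff) auto
    moreover have "Max ((\<lambda>i. maxcorr (\<tau> i)) ` {..<n}) \<in> S" unfolding S_def using small dec by blast
    ultimately show "\<exists>x\<in>S. x < \<delta>" by blast
  qed
  have "Inf S = 0 \<longleftrightarrow> (\<forall>\<delta>>0. \<exists>x\<in>S. x < \<delta>)"
  proof
    assume "Inf S = 0"
    then show "\<forall>\<delta>>0. \<exists>x\<in>S. x < \<delta>" using cInf_less_iff[OF S_ne S_bdd] by simp
  next
    assume approach: "\<forall>\<delta>>0. \<exists>x\<in>S. x < \<delta>"
    have "0 \<le> Inf S" by (rule cInf_greatest[OF S_ne S_nonneg])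
    moreover have "\<not> Inf S > 0"
    proof
      assume "Inf S > 0"
      then obtain x where "x \<in> S" "x < Inf S" using approach by blast
      then show False using cInf_lower[OF _ S_bdd] by fastforce
    qed
    ultimately show "Inf S = 0" by simp
  qed
  then show ?thesis unfolding maxent small_iff .
qed

lemma norm_diff_tensor_ptrace_le:
  fixes \<tau> :: "complex^('a::finite\<times>'b::finite)^('a\<times>'b)"
  assumes "density \<tau>"
  shows "norm (\<tau> - tensor (ptraceB \<tau>) (ptraceA \<tau>)) \<le> real (CARD('a\<times>'b))^2 * maxcorr \<tau>"
proof -
  have "norm (\<tau> - tensor (ptraceB \<tau>) (ptraceA \<tau>)) \<le>
      (\<Sum>r\<in>UNIV. \<Sum>s\<in>UNIV. cmod ((\<tau> - tensor (ptraceB \<tau>) (ptraceA \<tau>))$r$s))"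
    by (rule norm_matrix_le_sum_entries)
  also have "\<dots> \<le> (\<Sum>r\<in>(UNIV::('a\<times>'b) set). \<Sum>s\<in>(UNIV::('a\<times>'b) set). maxcorr \<tau>)"
  proof (intro sum_mono)
    fix r s :: "'a \<times> 'b"
    show "cmod ((\<tau> - tensor (ptraceB \<tau>) (ptraceA \<tau>))$r$s) \<le> maxcorr \<tau>"
      using entry_diff_tensor_ptrace_le_maxcorr[OF assms, of "fst r" "snd r" "fst s" "snd s"]
      by (simp add: tensor_def)
  qed
  also have "\<dots> = real (CARD('a\<times>'b))^2 * maxcorr \<tau>" by (simp add: power2_eq_square)
  finally show ?thesis .
qed

text \<open>The separable witness replaces each \<open>\<tau>\<^sub>i\<close> by the product of its marginals.\<close>
lemma approx_by_convex_hull_product_states: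
  fixes \<tau> :: "nat \<Rightarrow> complex^('a::finite\<times>'b::finite)^('a\<times>'b)"
  assumes "\<forall>i<n. p i \<ge> 0 \<and> density (\<tau> i) \<and> maxcorr (\<tau> i) \<le> \<delta>" "(\<Sum>i<n. p i) = 1"
  shows "\<exists>\<sigma>\<in>convex hull product_states. dist \<sigma> (\<Sum>i<n. p i *\<^sub>R \<tau> i) \<le> real (CARD('a\<times>'b))^2 * \<delta>"
proof
  let ?N = "real (CARD('a\<times>'b))^2"
  let ?\<sigma> = "\<lambda>i. tensor (ptraceB (\<tau> i)) (ptraceA (\<tau> i))"
  show "(\<Sum>i<n. p i *\<^sub>R ?\<sigma> i) \<in> convex hull product_states"
    using assms by (intro convex_sum)
      (auto intro!: hull_inc density_ptraceA density_ptraceB simp: product_states_def)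
  have "dist (\<Sum>i<n. p i *\<^sub>R ?\<sigma> i) (\<Sum>i<n. p i *\<^sub>R \<tau> i) = norm (\<Sum>i<n. p i *\<^sub>R (\<tau> i - ?\<sigma> i))"
    by (simp add: dist_norm norm_minus_commute scaleR_diff_right sum_subtractf)
  also have "\<dots> \<le> (\<Sum>i<n. p i * norm (\<tau> i - ?\<sigma> i))"
    using norm_sum[of "\<lambda>i. p i *\<^sub>R (\<tau> i - ?\<sigma> i)" "{..<n}"] assms(1) by simp
  also have "\<dots> \<le> (\<Sum>i<n. p i * (?N * \<delta>))"
  proof (intro sum_mono mult_left_mono)
    fix i assume "i \<in> {..<n}"
    then have i: "p i \<ge> 0" "density (\<tau> i)" "maxcorr (\<tau> i) \<le> \<delta>" using assms(1) by auto
    have "norm (\<tau> i - ?\<sigma> i) \<le> ?N * maxcorr (\<tau> i)" by (rule norm_diff_tensor_ptrace_le[OF i(2)])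
    also have "\<dots> \<le> ?N * \<delta>" using i(3) by (intro mult_left_mono) simp_all
    finally show "norm (\<tau> i - ?\<sigma> i) \<le> ?N * \<delta>" .
    show "0 \<le> p i" by (rule i(1))
  qed
  also have "\<dots> = ?N * \<delta>" using assms(2) by (simp flip: sum_distrib_right)
  finally show "dist (\<Sum>i<n. p i *\<^sub>R ?\<sigma> i) (\<Sum>i<n. p i *\<^sub>R \<tau> i) \<le> ?N * \<delta>" .
qed

lemma maxent_eq_0_imp_approachable:
  fixes \<rho> :: "complex^('a::finite\<times>'b::finite)^('a\<times>'b)"
  assumes "density \<rho>" "maxent \<rho> = 0" "e > 0"
  shows "\<exists>\<sigma>\<in>convex hull product_states. dist \<sigma> \<rho> < e"
proof -
  let ?N = "real (CARD('a\<times>'b))^2"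
  have N_pos: "?N + 1 > 0" by (simp add: add_nonneg_pos)
  then have "e / (?N + 1) > 0" using \<open>e > 0\<close> by simp
  then obtain n :: nat and p \<tau> where dec: "\<forall>i<n. p i \<ge> 0 \<and> density (\<tau> i) \<and> maxcorr (\<tau> i) < e / (?N + 1)"
    "\<rho> = (\<Sum>i<n. p i *\<^sub>R \<tau> i)"
    using assms(2) unfolding maxent_eq_0_iff[OF assms(1)] by blast
  then have "(\<Sum>i<n. p i) = 1" using decomposition_weights_sum[OF assms(1)] by blast
  with dec obtain \<sigma> where "\<sigma> \<in> convex hull product_states" "dist \<sigma> \<rho> \<le> ?N * (e / (?N + 1))"
    using approx_by_convex_hull_product_states[of n p \<tau> "e / (?N + 1)"] by (auto intro: less_imp_le)
  moreover have "?N * (e / (?N + 1)) < e"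
    unfolding times_divide_eq_right pos_divide_less_eq[OF N_pos] using \<open>e > 0\<close> by (simp add: algebra_simps)
  ultimately show ?thesis by force
qed

theorem theorem6:
  fixes \<rho> :: "complex^('a::finite \<times> 'b::finite)^('a \<times> 'b)"
  assumes "density \<rho>"
  shows "maxent \<rho> = 0 \<longleftrightarrow> separable \<rho>"
proof
  assume "separable \<rho>"
  then obtain n p and tA :: "nat \<Rightarrow> complex^'a^'a" and tB :: "nat \<Rightarrow> complex^'b^'b"
    where "\<forall>i<n. p i \<ge> 0 \<and> density (tA i) \<and> density (tB i)" "\<rho> = (\<Sum>i<n. p i *\<^sub>R tensor (tA i) (tB i))"
    unfolding separable_def by blast
  then show "maxent \<rho> = 0"
    unfolding maxent_eq_0_iff[OF assms]
    by (intro allI impI exI[where x=n] exI[where x=p] exI[where x="\<lambda>i. tensor (tA i) (tB i)"])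
      (simp add: density_tensor maxcorr_tensor)
next
  assume "maxent \<rho> = 0"
  then have "\<rho> \<in> convex hull product_states"
    using maxent_eq_0_imp_approachable[OF assms] closed_approachable
      compact_imp_closed[OF compact_convex_hull[OF compact_product_states]]
    by blast
  then show "separable \<rho>" by (simp add: separable_iff_convex_hull_product_states)
qed

end
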